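(* Let $\{(X_s,\|\cdot\|_s)\}_{s\in\mathbb N_0}$ be a sequence of reflexive Banach spaces such that $\{0\}\neq\bigcap_{s}X_s\subseteq\cdots\subseteq X_2\subseteq X_1\subseteq X_0$, $\|\cdot\|_0\le\|\cdot\|_1\le\|\cdot\|_2\le\cdots$, and $X_F:=\bigcap_s X_s$ is dense in $X_s$ for every $s$. Let $\{g_i\}_{i=1}^\infty\in(X_0^* )^{\mathbb N}$ with $g_i\ne0$ for all $i$. For $s\in\mathbb N_0$ and a scalar sequence $c=\{c_i\}$ put $M^c_s:=\{f\in X_s: |c_i|\le|g_i(f)|\ \forall i\}$, and define $$\Theta_s:=\{c: M^c_s\neq\varnothing\},\qquad \|c\|_s:=\inf\{\|f\|_s: f\in M^c_s\}.$$ Consider for $s\in\mathbb N_0$: $(\mathcal A_1^s)$: for all $c,d\in\Theta_s$, $f\in M^c_s$, $h\in M^d_s$ there is $r\in M^{c+d}_s$ with $\|r\|_s\le\|f\|_s+\|h\|_s$; $(\mathcal A_2^s)$: for every $c\in\Theta_s$ and $\varepsilon>0$ there exist $k\in\mathbb N$ and $f\in M^{c^{(k)}}_s$ with $\|f\|_s<\varepsilon$, where $c^{(k)}=\{0,\dots,0,c_{k+1},c_{k+2},\dots\}$; $(\mathcal A_3^s)$: there is $A_s\in(0,1]$ such that for every $f\in X_s$ and every $\widetilde f\in M_s^{\{g_i(f)\}_{i=1}^\infty}$, $A_s\|f\|_s\le\|\widetilde f\|_s$. Assume $(\mathcal A_1^s)$ holds for every $s\in\mathbb N_0$. Then: $(\mathcal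 P_1)$ $\{\Theta_s\}_{s\in\mathbb N_0}$ is a sequence of solid $BK$-spaces with $\bigcap_s\Theta_s\neq\{0\}$, $\cdots\subseteq\Theta_2\subseteq\Theta_1\subseteq\Theta_0$ and $\|\cdot\|_0\le\|\cdot\|_1\le\cdots$ on these spaces, such that $\{g_i|_{X_s}\}$ is a $\Theta_s$-Bessel sequence for $X_s$ with bound $1$ for every $s\in\mathbb N_0$; $(\mathcal P_2)$ for every $s\in\mathbb N$, $\{g_i|_{X_s}\}$ is a $\Theta_s$-frame for $X_s$ if and only if $(\mathcal A_3^s)$ holds, and if $(\mathcal A_3^s)$ holds with $A_s=1$ then $\{g_i|_{X_s}\}$ is a tight $\Theta_s$-frame for $X_s$; $(\mathcal P_3)$ for every $s\in\mathbb N$, $\Theta_s$ is a $CB$-space if and only if $(\mathcal A_2^s)$ holds.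
   Context: A Banach sequence space $\Theta$ is solid if $\{c_i\}\in\Theta$ and $|d_i|\le|c_i|$ for all $i$ imply $\{d_i\}\in\Theta$ with $\|\{d_i\}\|_\Theta\le\|\{c_i\}\|_\Theta$; a $BK$-space if coordinate functionals are continuous; a $CB$-space if it is a $BK$-space whose canonical unit vectors form a Schauder basis. For a Banach space $Y$ and a Banach sequence space $\Theta$, $\{g_i\}\subset Y^*$ is a $\Theta$-Bessel sequence for $Y$ with bound $B$ if $\{g_i(f)\}\in\Theta$ and $\|\{g_i(f)\}\|_\Theta\le B\|f\|$ for all $f\in Y$; a $\Theta$-frame if additionally $A\|f\|\le\|\{g_i(f)\}\|_\Theta$ for some $A>0$ and all $f$; tight if one can take $A=B$. *)

theory Defs
  imports "HOL-Analysis.Analysis"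
begin

definition lin_on :: "'a::real_vector set \<Rightarrow> ('a \<Rightarrow> real) \<Rightarrow> bool" where
  "lin_on V \<phi> \<longleftrightarrow> (\<forall>x\<in>V. \<forall>y\<in>V. \<phi> (x + y) = \<phi> x + \<phi> y) \<and>
                    (\<forall>a. \<forall>x\<in>V. \<phi> (a *\<^sub>R x) = a * \<phi> x)"

definition banach_on :: "'a::real_vector set \<Rightarrow> ('a \<Rightarrow> real) \<Rightarrow> bool" where
  "banach_on V N \<longleftrightarrow> subspace V \<and>
     (\<forall>x\<in>V. N x \<ge> 0 \<and> (N x = 0 \<longleftrightarrow> x = 0)) \<and>
     (\<forall>a. \<forall>x\<in>V. N (a *\<^sub>R x) = \<bar>a\<bar> * N x) \<and>
     (\<forall>x\<in>V. \<forall>y\<in>V. N (x + y) \<le> N x + N y) \<and>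
     (\<forall>u. (\<forall>n. u n \<in> V) \<longrightarrow> (\<forall>e>0. \<exists>M. \<forall>m\<ge>M. \<forall>n\<ge>M. N (u m - u n) < e) \<longrightarrow>
          (\<exists>x\<in>V. (\<lambda>n. N (u n - x)) \<longlonglongrightarrow> 0))"

definition dual_on :: "'a::real_vector set \<Rightarrow> ('a \<Rightarrow> real) \<Rightarrow> ('a \<Rightarrow> real) set" where
  "dual_on V N = {\<phi>. lin_on V \<phi> \<and> (\<exists>C. \<forall>x\<in>V. \<bar>\<phi> x\<bar> \<le> C * N x) \<and> (\<forall>x. x \<notin> V \<longrightarrow> \<phi> x = 0)}"

definition dual_norm :: "'a::real_vector set \<Rightarrow> ('a \<Rightarrow> real) \<Rightarrow> ('a \<Rightarrow> real) \<Rightarrow> real" where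
  "dual_norm V N \<phi> = Sup {\<bar>\<phi> x\<bar> | x. x \<in> V \<and> N x \<le> 1}"

text \<open>Reflexivity: the canonical embedding into the bidual is surjective, i.e. every
  bounded linear functional on the dual space is evaluation at some point of V.\<close>
definition reflexive_on :: "'a::real_vector set \<Rightarrow> ('a \<Rightarrow> real) \<Rightarrow> bool" where
  "reflexive_on V N \<longleftrightarrow>
    (\<forall>\<Phi> :: ('a \<Rightarrow> real) \<Rightarrow> real.
       (\<forall>\<phi>\<in>dual_on V N. \<forall>\<psi>\<in>dual_on V N. \<Phi> (\<lambda>x. \<phi> x + \<psi> x) = \<Phi> \<phi> + \<Phi> \<psi>) \<and>
       (\<forall>a. \<forall>\<phi>\<in>dual_on V N. \<Phi> (\<lambda>x. a * \<phi> x) = a * \<Phi> \<phi>) \<and>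
       (\<exists>C. \<forall>\<phi>\<in>dual_on V N. \<bar>\<Phi> \<phi>\<bar> \<le> C * dual_norm V N \<phi>)
     \<longrightarrow> (\<exists>x\<in>V. \<forall>\<phi>\<in>dual_on V N. \<Phi> \<phi> = \<phi> x))"

definition banach_seq_space :: "(nat \<Rightarrow> real) set \<Rightarrow> ((nat \<Rightarrow> real) \<Rightarrow> real) \<Rightarrow> bool" where
  "banach_seq_space \<Theta> nr \<longleftrightarrow>
     (\<lambda>i. 0) \<in> \<Theta> \<and>
     (\<forall>c\<in>\<Theta>. \<forall>d\<in>\<Theta>. (\<lambda>i. c i + d i) \<in> \<Theta>) \<and>
     (\<forall>a. \<forall>c\<in>\<Theta>. (\<lambda>i. a * c i) \<in> \<Theta>) \<and>
     (\<forall>c\<in>\<Theta>. nr c \<ge> 0 \<and> (nr c = 0 \<longleftrightarrow> c = (\<lambda>i. 0))) \<and>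
     (\<forall>a. \<forall>c\<in>\<Theta>. nr (\<lambda>i. a * c i) = \<bar>a\<bar> * nr c) \<and>
     (\<forall>c\<in>\<Theta>. \<forall>d\<in>\<Theta>. nr (\<lambda>i. c i + d i) \<le> nr c + nr d) \<and>
     (\<forall>u. (\<forall>n. u n \<in> \<Theta>) \<longrightarrow>
          (\<forall>e>0. \<exists>M. \<forall>m\<ge>M. \<forall>n\<ge>M. nr (\<lambda>i. u m i - u n i) < e) \<longrightarrow>
          (\<exists>c\<in>\<Theta>. (\<lambda>n. nr (\<lambda>i. u n i - c i)) \<longlonglongrightarrow> 0))"

definition solid :: "(nat \<Rightarrow> real) set \<Rightarrow> ((nat \<Rightarrow> real) \<Rightarrow> real) \<Rightarrow> bool" where
  "solid \<Theta> nr \<longleftrightarrow> (\<forall>c\<in>\<Theta>. \<forall>d. (\<forall>i. \<bar>d i\<bar> \<le> \<bar>c i\<bar>) \<longrightarrow> d \<in> \<Theta> \<and> nr d \<le> nr c)"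

definition BK_space :: "(nat \<Rightarrow> real) set \<Rightarrow> ((nat \<Rightarrow> real) \<Rightarrow> real) \<Rightarrow> bool" where
  "BK_space \<Theta> nr \<longleftrightarrow> banach_seq_space \<Theta> nr \<and>
     (\<forall>i. \<forall>c\<in>\<Theta>. \<forall>e>0. \<exists>\<delta>>0. \<forall>d\<in>\<Theta>. nr (\<lambda>j. d j - c j) < \<delta> \<longrightarrow> \<bar>d i - c i\<bar> < e)"

definition unit_vec :: "nat \<Rightarrow> nat \<Rightarrow> real" where
  "unit_vec k = (\<lambda>i. if i = k then 1 else 0)"

definition schauder_basis :: "(nat \<Rightarrow> real) set \<Rightarrow> ((nat \<Rightarrow> real) \<Rightarrow> real) \<Rightarrow> (nat \<Rightarrow> nat \<Rightarrow> real) \<Rightarrow> bool" where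
  "schauder_basis \<Theta> nr e \<longleftrightarrow> (\<forall>k. e k \<in> \<Theta>) \<and>
     (\<forall>c\<in>\<Theta>. \<exists>!a :: nat \<Rightarrow> real.
        (\<lambda>n. nr (\<lambda>i. c i - (\<Sum>k<n. a k * e k i))) \<longlonglongrightarrow> 0)"

definition CB_space :: "(nat \<Rightarrow> real) set \<Rightarrow> ((nat \<Rightarrow> real) \<Rightarrow> real) \<Rightarrow> bool" where
  "CB_space \<Theta> nr \<longleftrightarrow> BK_space \<Theta> nr \<and> schauder_basis \<Theta> nr unit_vec"

definition bessel_seq ::
  "'a set \<Rightarrow> ('a \<Rightarrow> real) \<Rightarrow> (nat \<Rightarrow> real) set \<Rightarrow> ((nat \<Rightarrow> real) \<Rightarrow> real) \<Rightarrow> (nat \<Rightarrow> 'a \<Rightarrow> real) \<Rightarrow> real \<Rightarrow> bool" where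
  "bessel_seq Y NY \<Theta> nr g B \<longleftrightarrow> (\<forall>f\<in>Y. (\<lambda>i. g i f) \<in> \<Theta> \<and> nr (\<lambda>i. g i f) \<le> B * NY f)"

definition frame_seq ::
  "'a set \<Rightarrow> ('a \<Rightarrow> real) \<Rightarrow> (nat \<Rightarrow> real) set \<Rightarrow> ((nat \<Rightarrow> real) \<Rightarrow> real) \<Rightarrow> (nat \<Rightarrow> 'a \<Rightarrow> real) \<Rightarrow> bool" where
  "frame_seq Y NY \<Theta> nr g \<longleftrightarrow> (\<exists>B. bessel_seq Y NY \<Theta> nr g B) \<and>
     (\<exists>A>0. \<forall>f\<in>Y. A * NY f \<le> nr (\<lambda>i. g i f))"

definition tight_frame_seq ::
  "'a set \<Rightarrow> ('a \<Rightarrow> real) \<Rightarrow> (nat \<Rightarrow> real) set \<Rightarrow> ((nat \<Rightarrow> real) \<Rightarrow> real) \<Rightarrow> (nat \<Rightarrow> 'a \<Rightarrow> real) \<Rightarrow> bool" where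
  "tight_frame_seq Y NY \<Theta> nr g \<longleftrightarrow> (\<exists>A>0. bessel_seq Y NY \<Theta> nr g A \<and>
     (\<forall>f\<in>Y. A * NY f \<le> nr (\<lambda>i. g i f)))"

definition Mset :: "(nat \<Rightarrow> 'a set) \<Rightarrow> (nat \<Rightarrow> 'a \<Rightarrow> real) \<Rightarrow> nat \<Rightarrow> (nat \<Rightarrow> real) \<Rightarrow> 'a set" where
  "Mset X g s c = {f \<in> X s. \<forall>i. \<bar>c i\<bar> \<le> \<bar>g i f\<bar>}"

definition Theta :: "(nat \<Rightarrow> 'a set) \<Rightarrow> (nat \<Rightarrow> 'a \<Rightarrow> real) \<Rightarrow> nat \<Rightarrow> (nat \<Rightarrow> real) set" where
  "Theta X g s = {c. Mset X g s c \<noteq> {}}"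

definition Theta_norm :: "(nat \<Rightarrow> 'a set) \<Rightarrow> (nat \<Rightarrow> 'a \<Rightarrow> real) \<Rightarrow> (nat \<Rightarrow> 'a \<Rightarrow> real) \<Rightarrow> nat \<Rightarrow> (nat \<Rightarrow> real) \<Rightarrow> real" where
  "Theta_norm X N g s c = Inf (N s ` Mset X g s c)"

definition condA1 :: "(nat \<Rightarrow> 'a set) \<Rightarrow> (nat \<Rightarrow> 'a \<Rightarrow> real) \<Rightarrow> (nat \<Rightarrow> 'a \<Rightarrow> real) \<Rightarrow> nat \<Rightarrow> bool" where
  "condA1 X N g s \<longleftrightarrow> (\<forall>c\<in>Theta X g s. \<forall>d\<in>Theta X g s. \<forall>f\<in>Mset X g s c. \<forall>h\<in>Mset X g s d.
      \<exists>r\<in>Mset X g s (\<lambda>i. c i + d i). N s r \<le> N s f + N s h)"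

text \<open>c^(k) with the first k entries (indices 0..k-1) replaced by 0, k \<ge> 1.\<close>
definition condA2 :: "(nat \<Rightarrow> 'a set) \<Rightarrow> (nat \<Rightarrow> 'a \<Rightarrow> real) \<Rightarrow> (nat \<Rightarrow> 'a \<Rightarrow> real) \<Rightarrow> nat \<Rightarrow> bool" where
  "condA2 X N g s \<longleftrightarrow> (\<forall>c\<in>Theta X g s. \<forall>e>0. \<exists>k\<ge>1.
      \<exists>f\<in>Mset X g s (\<lambda>i. if i < k then 0 else c i). N s f < e)"

definition condA3_with :: "(nat \<Rightarrow> 'a set) \<Rightarrow> (nat \<Rightarrow> 'a \<Rightarrow> real) \<Rightarrow> (nat \<Rightarrow> 'a \<Rightarrow> real) \<Rightarrow> nat \<Rightarrow> real \<Rightarrow> bool" where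
  "condA3_with X N g s A \<longleftrightarrow> 0 < A \<and> A \<le> 1 \<and>
      (\<forall>f\<in>X s. \<forall>ft\<in>Mset X g s (\<lambda>i. g i f). A * N s f \<le> N s ft)"

definition condA3 :: "(nat \<Rightarrow> 'a set) \<Rightarrow> (nat \<Rightarrow> 'a \<Rightarrow> real) \<Rightarrow> (nat \<Rightarrow> 'a \<Rightarrow> real) \<Rightarrow> nat \<Rightarrow> bool" where
  "condA3 X N g s \<longleftrightarrow> (\<exists>A. condA3_with X N g s A)"

end

theory Submission
  imports Defs
begin

(* A sequence c lies in Theta_s when it is dominated coordinatewise by the coefficient sequence
   (g_i f) of some f in X_s, and its norm is the least such norm of f. Solidity, the Bessel bound 1,
   the frame characterisation and the monotonicity in s are immediate from this description; (A1)
   is exactly the triangle inequality, and each coordinate is bounded by the norm because each g_i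
   is bounded.

   Completeness rests on a Fatou property: if c^(m) \<rightarrow> c coordinatewise and every c^(m) has norm
   < e, pick f_m dominating c^(m) with norm < e. By reflexivity (Tychonoff on the dual ball plus
   Hahn-Banach) the f_m have a weak cluster point f of norm \<le> e, and |c_i| \<le> |g_i f| in the limit.

   Density of X_F yields, for each k, an element of X_F with g_k \<noteq> 0, so the unit vectors lie in
   every Theta_s; since c minus its k-th partial sum is the truncation c^(k), the unit vectors form
   a Schauder basis exactly when (A2) holds. *)

section \<open>Cluster points of bounded families\<close>

lemma cluster_point_in_closed:
  assumes "inf (nhds L) F \<noteq> bot" "closed S" "eventually (\<lambda>x. x \<in> S) F"
  shows "L \<in> S"
proof (rule ccontr)
  assume "L \<notin> S"
  then have "eventually (\<lambda>x. x \<notin> S) (nhds L)"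
    using assms(2) eventually_nhds_in_open[of "- S" L] by auto
  then have "eventually (\<lambda>_. False) (inf (nhds L) F)"
    using assms(3) unfolding eventually_inf by blast
  then show False using assms(1) by (simp add: eventually_False)
qed

lemma cluster_point_frequently:
  assumes "inf (nhds L) F \<noteq> bot" "open S" "L \<in> S"
  shows "\<exists>\<^sub>F x in F. x \<in> S"
  using cluster_point_in_closed[OF assms(1), of "- S"] assms(2,3)
  unfolding frequently_def by auto

lemma bounded_family_cluster_point:
  fixes e :: "nat \<Rightarrow> 'i \<Rightarrow> real"
  assumes bounded: "\<And>m i. \<bar>e m i\<bar> \<le> K i"
  obtains L where "\<And>i. \<bar>L i\<bar> \<le> K i"
    and "\<And>S. closed S \<Longrightarrow> (\<And>m. e m \<in> S) \<Longrightarrow> L \<in> S"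
    and "\<And>S. open S \<Longrightarrow> L \<in> S \<Longrightarrow> \<exists>\<^sub>F m in sequentially. e m \<in> S"
proof -
  define Q where "Q = PiE UNIV (\<lambda>i. {-K i..K i})"
  have "compactin (product_topology (\<lambda>_. euclidean) UNIV) Q"
    unfolding Q_def by (simp add: compactin_PiE)
  then have "compact Q" by (simp add: euclidean_product_topology)
  have "e m \<in> Q" for m
    unfolding Q_def PiE_UNIV_domain Pi_iff atLeastAtMost_iff
  proof (intro ballI conjI)
    fix i show "- K i \<le> e m i" "e m i \<le> K i" using bounded[of m i] by linarith+
  qed
  then have "\<forall>\<^sub>F h in filtermap e sequentially. h \<in> Q" by (simp add: eventually_filtermap)
  moreover have "filtermap e sequentially \<noteq> bot" by (simp add: filtermap_bot_iff)
  ultimately obtain L where "L \<in> Q" and L: "inf (nhds L) (filtermap e sequentially) \<noteq> bot"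
    using \<open>compact Q\<close> unfolding compact_filter by blast
  show thesis
  proof (rule that)
    fix i
    have "L i \<in> {-K i..K i}" using PiE_mem[OF \<open>L \<in> Q\<close>[unfolded Q_def]] by simp
    then show "\<bar>L i\<bar> \<le> K i" by auto
  next
    fix S assume "closed S" "\<And>m. e m \<in> S"
    then show "L \<in> S" using cluster_point_in_closed[OF L] by (simp add: eventually_filtermap)
  next
    fix S assume "open S" "L \<in> S"
    then show "\<exists>\<^sub>F m in sequentially. e m \<in> S"
      using cluster_point_frequently[OF L] by (simp add: frequently_filtermap)
  qed
qed

section \<open>Seminorms, dual functionals and weak cluster points\<close>

lemma dual_on_add:
  assumes "\<phi> \<in> dual_on V N" "\<psi> \<in> dual_on V N"
  shows "(\<lambda>x. \<phi> x + \<psi> x) \<in> dual_on V N"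
proof -
  obtain C D where "\<forall>x\<in>V. \<bar>\<phi> x\<bar> \<le> C * N x" "\<forall>x\<in>V. \<bar>\<psi> x\<bar> \<le> D * N x"
    using assms unfolding dual_on_def by blast
  then have "\<forall>x\<in>V. \<bar>\<phi> x + \<psi> x\<bar> \<le> (C + D) * N x"
    by (smt (verit, best) distrib_right)
  with assms show ?thesis unfolding dual_on_def lin_on_def
    by (intro CollectI conjI exI[of _ "C + D"]) (auto simp: algebra_simps)
qed

lemma dual_on_scale:
  assumes "\<phi> \<in> dual_on V N"
  shows "(\<lambda>x. a * \<phi> x) \<in> dual_on V N"
proof -
  obtain C where "\<forall>x\<in>V. \<bar>\<phi> x\<bar> \<le> C * N x" using assms unfolding dual_on_def by blast
  then have "\<forall>x\<in>V. \<bar>a * \<phi> x\<bar> \<le> (\<bar>a\<bar> * C) * N x"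
    by (simp add: abs_mult mult.assoc mult_left_mono)
  with assms show ?thesis unfolding dual_on_def lin_on_def
    by (intro CollectI conjI exI[of _ "\<bar>a\<bar> * C"]) (auto simp: algebra_simps)
qed

locale seminorm_on =
  fixes V :: "'a::real_vector set" and N :: "'a \<Rightarrow> real"
  assumes subspace: "subspace V"
    and homogeneous: "x \<in> V \<Longrightarrow> N (a *\<^sub>R x) = \<bar>a\<bar> * N x"
    and triangle: "x \<in> V \<Longrightarrow> y \<in> V \<Longrightarrow> N (x + y) \<le> N x + N y"

lemma banach_on_seminorm_on: "banach_on V N \<Longrightarrow> seminorm_on V N"
  unfolding banach_on_def seminorm_on_def by blast

context seminorm_on
begin

lemma seminorm_zero: "N 0 = 0"
  using homogeneous[OF subspace_0[OF subspace], of 0] by simp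

lemma seminorm_nonneg:
  assumes x: "x \<in> V"
  shows "0 \<le> N x"
proof -
  have "N (x + (-1) *\<^sub>R x) \<le> N x + N ((-1) *\<^sub>R x)"
    using x subspace by (intro triangle) (auto intro: subspace_scale subspace_neg)
  then show ?thesis using homogeneous[OF x, of "-1"] seminorm_zero by simp
qed

lemma dual_norm_bdd:
  assumes "\<psi> \<in> dual_on V N"
  shows "bdd_above {\<bar>\<psi> x\<bar> | x. x \<in> V \<and> N x \<le> 1}"
proof -
  obtain C where C: "\<forall>x\<in>V. \<bar>\<psi> x\<bar> \<le> C * N x" using assms unfolding dual_on_def by blast
  show ?thesis
  proof (rule bdd_aboveI[of _ "\<bar>C\<bar>"])
    fix z assume "z \<in> {\<bar>\<psi> x\<bar> | x. x \<in> V \<and> N x \<le> 1}"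
    then obtain x where "z = \<bar>\<psi> x\<bar>" "x \<in> V" "N x \<le> 1" by blast
    then show "z \<le> \<bar>C\<bar>" using C seminorm_nonneg[of x]
      by (smt (verit, ccfv_SIG) mult_left_le mult_right_mono)
  qed
qed

lemma dual_norm_nonneg:
  assumes "\<psi> \<in> dual_on V N"
  shows "0 \<le> dual_norm V N \<psi>"
proof -
  have "\<psi> (0 *\<^sub>R 0) = 0 * \<psi> 0"
    using assms subspace_0[OF subspace] unfolding dual_on_def lin_on_def by blast
  then have "\<psi> 0 = 0" by simp
  then have "\<bar>\<psi> 0\<bar> \<le> dual_norm V N \<psi>"
    unfolding dual_norm_def using dual_norm_bdd[OF assms] subspace_0[OF subspace] seminorm_zero
    by (intro cSup_upper) auto
  with \<open>\<psi> 0 = 0\<close> show ?thesis by simp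
qed

lemma dual_bound:
  assumes \<psi>: "\<psi> \<in> dual_on V N" and x: "x \<in> V"
  shows "\<bar>\<psi> x\<bar> \<le> dual_norm V N \<psi> * N x"
proof (cases "N x = 0")
  case True
  obtain C where "\<forall>x\<in>V. \<bar>\<psi> x\<bar> \<le> C * N x" using \<psi> unfolding dual_on_def by blast
  then show ?thesis using x True by fastforce
next
  case False
  then have pos: "N x > 0" using seminorm_nonneg[OF x] by simp
  define z where "z = (1 / N x) *\<^sub>R x"
  have "z \<in> V" "N z = 1" unfolding z_def using x pos subspace
    by (auto simp: homogeneous intro: subspace_scale)
  then have "\<bar>\<psi> z\<bar> \<le> dual_norm V N \<psi>"
    unfolding dual_norm_def using dual_norm_bdd[OF \<psi>] by (intro cSup_upper) auto
  moreover have "\<psi> z = \<psi> x / N x"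
    using \<psi> x unfolding z_def dual_on_def lin_on_def by simp
  ultimately show ?thesis using pos by (simp add: abs_divide divide_le_eq)
qed

(* Partial linear functionals dominated by N, represented by their graphs so that Zorn's lemma
   can be applied to set inclusion. *)
definition dominated_linear_graph :: "('a \<times> real) set \<Rightarrow> bool" where
  "dominated_linear_graph G \<longleftrightarrow> fst ` G \<subseteq> V \<and> single_valued G \<and>
     (\<forall>x a y b. (x, a) \<in> G \<longrightarrow> (y, b) \<in> G \<longrightarrow> (x + y, a + b) \<in> G) \<and>
     (\<forall>x a c. (x, a) \<in> G \<longrightarrow> (c *\<^sub>R x, c * a) \<in> G) \<and>
     (\<forall>x a. (x, a) \<in> G \<longrightarrow> a \<le> N x)"

lemma dominated_linear_graphD:
  assumes "dominated_linear_graph G"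
  shows "(x, a) \<in> G \<Longrightarrow> x \<in> V"
    and "(x, a) \<in> G \<Longrightarrow> (x, b) \<in> G \<Longrightarrow> a = b"
    and "(x, a) \<in> G \<Longrightarrow> (y, b) \<in> G \<Longrightarrow> (x + y, a + b) \<in> G"
    and "(x, a) \<in> G \<Longrightarrow> (c *\<^sub>R x, c * a) \<in> G"
    and "(x, a) \<in> G \<Longrightarrow> a \<le> N x"
proof -
  note D = assms[unfolded dominated_linear_graph_def single_valued_def]
  show "(x, a) \<in> G \<Longrightarrow> x \<in> V" using D by (metis fst_conv image_subset_iff)
  show "(x, a) \<in> G \<Longrightarrow> (x, b) \<in> G \<Longrightarrow> a = b" using D by blast
  show "(x, a) \<in> G \<Longrightarrow> (y, b) \<in> G \<Longrightarrow> (x + y, a + b) \<in> G" using D by blast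
  show "(x, a) \<in> G \<Longrightarrow> (c *\<^sub>R x, c * a) \<in> G" using D by blast
  show "(x, a) \<in> G \<Longrightarrow> a \<le> N x" using D by blast
qed

lemma dominated_linear_graph_line:
  assumes x0: "x0 \<in> V"
  shows "dominated_linear_graph {(c *\<^sub>R x0, c * N x0) | c. True}"
    (is "dominated_linear_graph ?L")
  unfolding dominated_linear_graph_def single_valued_def
proof (intro conjI allI impI subsetI)
  fix x assume "x \<in> fst ` ?L"
  then obtain c where "x = c *\<^sub>R x0" by force
  then show "x \<in> V" using subspace_scale[OF subspace x0] by simp
next
  fix x a b assume "(x, a) \<in> ?L" "(x, b) \<in> ?L"
  then obtain c d where cd: "c *\<^sub>R x0 = d *\<^sub>R x0" and ab: "a = c * N x0" "b = d * N x0" by auto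
  show "a = b"
  proof (cases "x0 = 0")
    case True then show ?thesis using ab seminorm_zero by simp
  next
    case False then show ?thesis using ab cd by (simp add: scaleR_cancel_right)
  qed
next
  fix x a assume "(x, a) \<in> ?L"
  then obtain c where "x = c *\<^sub>R x0" "a = c * N x0" by blast
  moreover have "c * N x0 \<le> \<bar>c\<bar> * N x0" by (rule mult_right_mono[OF abs_ge_self seminorm_nonneg[OF x0]])
  ultimately show "a \<le> N x" using homogeneous[OF x0] by simp
next
  fix x a y b assume "(x, a) \<in> ?L" "(y, b) \<in> ?L"
  then obtain c d where "x = c *\<^sub>R x0" "a = c * N x0" "y = d *\<^sub>R x0" "b = d * N x0" by blast
  then have "(x + y, a + b) = ((c + d) *\<^sub>R x0, (c + d) * N x0)" by (simp add: algebra_simps)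
  then show "(x + y, a + b) \<in> ?L" by blast
next
  fix x a e assume "(x, a) \<in> ?L"
  then obtain c where "x = c *\<^sub>R x0" "a = c * N x0" by blast
  then have "(e *\<^sub>R x, e * a) = ((e * c) *\<^sub>R x0, (e * c) * N x0)" by simp
  then show "(e *\<^sub>R x, e * a) \<in> ?L" by blast
qed

lemma dominated_linear_graph_chain_Union:
  assumes C: "C \<in> chains {G. dominated_linear_graph G}"
  shows "dominated_linear_graph (\<Union>C)"
proof -
  have dom: "\<And>G. G \<in> C \<Longrightarrow> dominated_linear_graph G" using C unfolding chains_def by blast
  have common: "\<exists>G\<in>C. p \<in> G \<and> q \<in> G" if "p \<in> \<Union>C" "q \<in> \<Union>C" for p q
    using C that unfolding chains_def chain_subset_def by blast
  show ?thesis unfolding dominated_linear_graph_def single_valued_def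
  proof (intro conjI allI impI subsetI)
    fix x assume "x \<in> fst ` \<Union>C"
    then show "x \<in> V" using dominated_linear_graphD(1)[OF dom] by force
  next
    fix x a b assume "(x, a) \<in> \<Union>C" "(x, b) \<in> \<Union>C"
    then show "a = b" using common dominated_linear_graphD(2)[OF dom] by meson
  next
    fix x a y b assume "(x, a) \<in> \<Union>C" "(y, b) \<in> \<Union>C"
    then show "(x + y, a + b) \<in> \<Union>C" using common dominated_linear_graphD(3)[OF dom] by blast
  next
    fix x a c assume "(x, a) \<in> \<Union>C"
    then show "(c *\<^sub>R x, c * a) \<in> \<Union>C" using dominated_linear_graphD(4)[OF dom] by blast
  next
    fix x a assume "(x, a) \<in> \<Union>C"
    then show "a \<le> N x" using dominated_linear_graphD(5)[OF dom] by blast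
  qed
qed

lemma dominated_extension_constant:
  assumes G: "dominated_linear_graph G" "G \<noteq> {}" and y: "y \<in> V"
  obtains t where "\<And>x a. (x, a) \<in> G \<Longrightarrow> a - N (x - y) \<le> t"
    and "\<And>x a. (x, a) \<in> G \<Longrightarrow> t \<le> N (x + y) - a"
proof -
  have separated: "a - N (x - y) \<le> N (w + y) - b" if "(x, a) \<in> G" "(w, b) \<in> G" for x a w b
  proof -
    have "a + b \<le> N (x + w)" using dominated_linear_graphD(3,5)[OF G(1)] that by blast
    also have "N (x + w) = N ((x - y) + (w + y))" by simp
    also have "\<dots> \<le> N (x - y) + N (w + y)"
      using that y subspace dominated_linear_graphD(1)[OF G(1)]
      by (intro triangle) (auto intro: subspace_add subspace_diff)
    finally show ?thesis by simp
  qed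
  define T where "T = {a - N (x - y) | x a. (x, a) \<in> G}"
  obtain w b where wb: "(w, b) \<in> G" using G(2) by auto
  have ne: "T \<noteq> {}" using wb unfolding T_def by blast
  have bdd: "bdd_above T"
    using separated[OF _ wb] unfolding T_def by (intro bdd_aboveI[of _ "N (w + y) - b"]) blast
  show thesis
  proof (rule that[of "Sup T"])
    fix x a assume "(x, a) \<in> G"
    then show "a - N (x - y) \<le> Sup T" by (intro cSup_upper[OF _ bdd]) (auto simp: T_def)
  next
    fix x a assume "(x, a) \<in> G"
    then show "Sup T \<le> N (x + y) - a"
      by (intro cSup_least[OF ne]) (auto simp: T_def intro: separated)
  qed
qed

lemma dominated_extension_bound:
  assumes G: "dominated_linear_graph G" and y: "y \<in> V" and xa: "(x, a) \<in> G"
    and lower: "\<And>x a. (x, a) \<in> G \<Longrightarrow> a - N (x - y) \<le> t"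
    and upper: "\<And>x a. (x, a) \<in> G \<Longrightarrow> t \<le> N (x + y) - a"
  shows "a + c * t \<le> N (x + c *\<^sub>R y)"
proof (cases c "0::real" rule: linorder_cases)
  case equal
  then show ?thesis using dominated_linear_graphD(5)[OF G xa] by simp
next
  case less
  define d where "d = - c"
  have d: "0 < d" "c = - d" using less by (simp_all add: d_def)
  have x: "x \<in> V" using dominated_linear_graphD(1)[OF G xa] .
  have "(1 / d) * a - N ((1 / d) *\<^sub>R x - y) \<le> t"
    using lower[OF dominated_linear_graphD(4)[OF G xa]] .
  then have "d * ((1 / d) * a - N ((1 / d) *\<^sub>R x - y)) \<le> d * t"
    using d by (intro mult_left_mono) auto
  moreover have "d * N ((1 / d) *\<^sub>R x - y) = N (x + c *\<^sub>R y)"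
  proof -
    have "d * N ((1 / d) *\<^sub>R x - y) = N (d *\<^sub>R ((1 / d) *\<^sub>R x - y))"
      using homogeneous[of "(1 / d) *\<^sub>R x - y" d] d x y subspace
      by (simp add: subspace_diff subspace_scale)
    also have "d *\<^sub>R ((1 / d) *\<^sub>R x - y) = x + c *\<^sub>R y"
      using d by (simp add: algebra_simps)
    finally show ?thesis .
  qed
  ultimately show ?thesis using d by (simp add: algebra_simps)
next
  case greater
  have x: "x \<in> V" using dominated_linear_graphD(1)[OF G xa] .
  have "t \<le> N ((1 / c) *\<^sub>R x + y) - (1 / c) * a"
    using upper[OF dominated_linear_graphD(4)[OF G xa]] .
  then have "c * t \<le> c * (N ((1 / c) *\<^sub>R x + y) - (1 / c) * a)"
    using greater by (intro mult_left_mono) auto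
  moreover have "c * N ((1 / c) *\<^sub>R x + y) = N (x + c *\<^sub>R y)"
    using homogeneous[of "(1 / c) *\<^sub>R x + y" c] greater x y subspace
    by (simp add: subspace_add subspace_scale scaleR_add_right)
  ultimately show ?thesis using greater by (simp add: algebra_simps)
qed

lemma dominated_linear_graph_extension:
  assumes G: "dominated_linear_graph G" and y: "y \<in> V" "y \<notin> fst ` G"
    and lower: "\<And>x a. (x, a) \<in> G \<Longrightarrow> a - N (x - y) \<le> t"
    and upper: "\<And>x a. (x, a) \<in> G \<Longrightarrow> t \<le> N (x + y) - a"
  shows "dominated_linear_graph {(x + c *\<^sub>R y, a + c * t) | x a c. (x, a) \<in> G}"
    (is "dominated_linear_graph ?G'")
  unfolding dominated_linear_graph_def single_valued_def
proof (intro conjI allI impI subsetI)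
  fix z assume "z \<in> fst ` ?G'"
  then show "z \<in> V"
    using dominated_linear_graphD(1)[OF G] y(1) subspace by (force intro: subspace_add subspace_scale)
next
  fix z a b assume "(z, a) \<in> ?G'" "(z, b) \<in> ?G'"
  then obtain x1 a1 c1 x2 a2 c2 where h: "(x1, a1) \<in> G" "(x2, a2) \<in> G"
    "z = x1 + c1 *\<^sub>R y" "a = a1 + c1 * t" "z = x2 + c2 *\<^sub>R y" "b = a2 + c2 * t"
    by blast
  have "c1 = c2"
  proof (rule ccontr)
    assume "c1 \<noteq> c2"
    have "(x1 + (-1) *\<^sub>R x2, a1 + (-1) * a2) \<in> G"
      using dominated_linear_graphD(3,4)[OF G] h(1,2) by blast
    from dominated_linear_graphD(4)[OF G this, of "1 / (c2 - c1)"]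
    have "((1 / (c2 - c1)) *\<^sub>R (x1 - x2), (1 / (c2 - c1)) * (a1 - a2)) \<in> G" by simp
    moreover have "x1 - x2 = (c2 - c1) *\<^sub>R y" using h(3,5) by (simp add: algebra_simps)
    then have "(1 / (c2 - c1)) *\<^sub>R (x1 - x2) = y" using \<open>c1 \<noteq> c2\<close> by simp
    ultimately show False using y(2) by force
  qed
  then show "a = b" using h dominated_linear_graphD(2)[OF G] by auto
next
  fix z a w b assume "(z, a) \<in> ?G'" "(w, b) \<in> ?G'"
  then obtain x1 a1 c1 x2 a2 c2 where h: "(x1, a1) \<in> G" "(x2, a2) \<in> G"
    "z = x1 + c1 *\<^sub>R y" "a = a1 + c1 * t" "w = x2 + c2 *\<^sub>R y" "b = a2 + c2 * t"
    by blast
  then have "z + w = (x1 + x2) + (c1 + c2) *\<^sub>R y" "a + b = (a1 + a2) + (c1 + c2) * t"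
    by (simp_all add: algebra_simps)
  then show "(z + w, a + b) \<in> ?G'" using dominated_linear_graphD(3)[OF G h(1,2)] by blast
next
  fix z a d assume "(z, a) \<in> ?G'"
  then obtain x1 a1 c1 where h: "(x1, a1) \<in> G" "z = x1 + c1 *\<^sub>R y" "a = a1 + c1 * t"
    by blast
  then have "d *\<^sub>R z = d *\<^sub>R x1 + (d * c1) *\<^sub>R y" "d * a = d * a1 + (d * c1) * t"
    by (simp_all add: algebra_simps)
  then show "(d *\<^sub>R z, d * a) \<in> ?G'" using dominated_linear_graphD(4)[OF G h(1)] by blast
next
  fix z a assume "(z, a) \<in> ?G'"
  then show "a \<le> N z" using dominated_extension_bound[OF G y(1) _ lower upper] by blast
qed

lemma exists_maximal_dominated_linear_graph:
  assumes x0: "x0 \<in> V"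
  obtains M where "dominated_linear_graph M" "(x0, N x0) \<in> M"
    "\<And>G. dominated_linear_graph G \<Longrightarrow> M \<subseteq> G \<Longrightarrow> G = M"
proof -
  let ?H = "{G. dominated_linear_graph G \<and> (x0, N x0) \<in> G}"
  have "\<forall>C\<in>chains ?H. \<exists>U\<in>?H. \<forall>G\<in>C. G \<subseteq> U"
  proof
    fix C assume C: "C \<in> chains ?H"
    show "\<exists>U\<in>?H. \<forall>G\<in>C. G \<subseteq> U"
    proof (cases "C = {}")
      case True
      have "(x0, N x0) \<in> {(c *\<^sub>R x0, c * N x0) | c. True}"
        by (intro CollectI exI[of _ 1]) simp
      then show ?thesis using True dominated_linear_graph_line[OF x0] by blast
    next
      case False
      have "C \<in> chains {G. dominated_linear_graph G}" using C unfolding chains_def by blast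
      then have "dominated_linear_graph (\<Union>C)" by (rule dominated_linear_graph_chain_Union)
      moreover have "(x0, N x0) \<in> \<Union>C" using C False unfolding chains_def by blast
      ultimately show ?thesis by blast
    qed
  qed
  then obtain M where M: "M \<in> ?H" and maximal: "\<forall>G\<in>?H. M \<subseteq> G \<longrightarrow> G = M"
    using Zorn_Lemma2[of ?H] by blast
  show thesis
  proof (rule that)
    show "dominated_linear_graph M" "(x0, N x0) \<in> M" using M by simp_all
    fix G assume "dominated_linear_graph G" "M \<subseteq> G"
    moreover from this have "(x0, N x0) \<in> G" using M by blast
    ultimately show "G = M" by (intro maximal[rule_format]) simp_all
  qed
qed

lemma maximal_dominated_linear_graph_total:
  assumes M: "dominated_linear_graph M" "M \<noteq> {}"
    and maximal: "\<And>G. dominated_linear_graph G \<Longrightarrow> M \<subseteq> G \<Longrightarrow> G = M"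
    and x: "x \<in> V"
  shows "x \<in> fst ` M"
proof (rule ccontr)
  assume x_new: "x \<notin> fst ` M"
  obtain t where "\<And>z a. (z, a) \<in> M \<Longrightarrow> a - N (z - x) \<le> t"
    "\<And>z a. (z, a) \<in> M \<Longrightarrow> t \<le> N (z + x) - a"
    using dominated_extension_constant[OF M x] by blast
  note extension = dominated_linear_graph_extension[OF M(1) x x_new this]
  let ?G' = "{(z + c *\<^sub>R x, a + c * t) | z a c. (z, a) \<in> M}"
  have "(z, a) \<in> ?G'" if "(z, a) \<in> M" for z a
    using that by (intro CollectI exI[of _ z] exI[of _ a] exI[of _ 0]) simp
  then have "M \<subseteq> ?G'" by auto
  with extension have "?G' = M" by (rule maximal)
  moreover obtain z a where "(z, a) \<in> M" using M(2) by auto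
  then have "(0, 0) \<in> M" using dominated_linear_graphD(4)[OF M(1), of z a 0] by simp
  then have "(x, t) \<in> ?G'" by (intro CollectI exI[of _ 0] exI[of _ 0] exI[of _ 1]) simp
  ultimately have "(x, t) \<in> M" by simp
  then show False using x_new rev_image_eqI[of "(x, t)" M x fst] by simp
qed

theorem hahn_banach_norming:
  assumes x0: "x0 \<in> V"
  obtains \<phi> where "\<phi> \<in> dual_on V N" "\<phi> x0 = N x0" "\<And>x. x \<in> V \<Longrightarrow> \<bar>\<phi> x\<bar> \<le> N x"
proof -
  obtain M where M: "dominated_linear_graph M" "(x0, N x0) \<in> M"
    and maximal: "\<And>G. dominated_linear_graph G \<Longrightarrow> M \<subseteq> G \<Longrightarrow> G = M"
    using exists_maximal_dominated_linear_graph[OF x0] by blast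
  define \<phi> where "\<phi> x = (if x \<in> V then THE a. (x, a) \<in> M else 0)" for x
  have \<phi>_eq: "\<phi> x = a" if "(x, a) \<in> M" for x a
    using that dominated_linear_graphD(1,2)[OF M(1)] unfolding \<phi>_def by (auto intro: the_equality)
  have graph: "(x, \<phi> x) \<in> M" if x: "x \<in> V" for x
  proof -
    have "M \<noteq> {}" using M(2) by blast
    then obtain p where "p \<in> M" "x = fst p"
      using maximal_dominated_linear_graph_total[OF M(1) _ maximal x] by blast
    then have "(x, snd p) \<in> M" by simp
    then show ?thesis using \<phi>_eq by simp
  qed
  have lin: "lin_on V \<phi>"
    unfolding lin_on_def
  proof (intro conjI ballI allI)
    fix x y assume "x \<in> V" "y \<in> V"
    show "\<phi> (x + y) = \<phi> x + \<phi> y"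
      by (rule \<phi>_eq, rule dominated_linear_graphD(3)[OF M(1) graph graph]) fact+
  next
    fix c x assume "x \<in> V"
    show "\<phi> (c *\<^sub>R x) = c * \<phi> x"
      by (rule \<phi>_eq, rule dominated_linear_graphD(4)[OF M(1) graph]) fact
  qed
  have bound: "\<bar>\<phi> x\<bar> \<le> N x" if x: "x \<in> V" for x
  proof -
    have "(-1) *\<^sub>R x \<in> V" using x subspace by (rule subspace_scale[rotated])
    then have "\<phi> ((-1) *\<^sub>R x) \<le> N ((-1) *\<^sub>R x)"
      using graph dominated_linear_graphD(5)[OF M(1)] by blast
    moreover have "\<phi> ((-1) *\<^sub>R x) = -1 * \<phi> x" using lin x unfolding lin_on_def by blast
    ultimately have "- \<phi> x \<le> N x" using homogeneous[OF x, of "-1"] by simp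
    moreover have "\<phi> x \<le> N x" using graph[OF x] dominated_linear_graphD(5)[OF M(1)] by blast
    ultimately show ?thesis by simp
  qed
  have "\<phi> \<in> dual_on V N"
    unfolding dual_on_def using lin bound by (auto simp: \<phi>_def intro!: exI[of _ 1])
  then show thesis using that \<phi>_eq[OF M(2)] bound by blast
qed

(* The maps \<phi> \<mapsto> \<phi> (r m), cut off outside the dual so that they lie in a compact box, have
   a cluster point L in the product topology (Tychonoff). Pointwise closed conditions pass to L,
   so L is a bounded linear functional on the dual, hence evaluation at some y by reflexivity;
   a norming functional for y then gives N y \<le> B. *)
theorem bounded_seq_weak_cluster_point:
  assumes refl: "reflexive_on V N" and r: "\<And>m. r m \<in> V" and bounded: "\<And>m. N (r m) \<le> B"
  obtains y where "y \<in> V" "N y \<le> B"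
    "\<And>\<phi> e. \<phi> \<in> dual_on V N \<Longrightarrow> 0 < e \<Longrightarrow> \<exists>\<^sub>F m in sequentially. \<bar>\<phi> (r m) - \<phi> y\<bar> < e"
proof -
  let ?D = "dual_on V N"
  define ev :: "nat \<Rightarrow> ('a \<Rightarrow> real) \<Rightarrow> real"
    where "ev m \<phi> = (if \<phi> \<in> ?D then \<phi> (r m) else 0)" for m \<phi>
  define K where "K \<phi> = \<bar>B * dual_norm V N \<phi>\<bar>" for \<phi>
  have ev_bound: "\<bar>ev m \<phi>\<bar> \<le> K \<phi>" for m \<phi>
  proof (cases "\<phi> \<in> ?D")
    case True
    have "\<bar>\<phi> (r m)\<bar> \<le> dual_norm V N \<phi> * N (r m)" by (rule dual_bound[OF True r])
    also have "\<dots> \<le> dual_norm V N \<phi> * B" by (rule mult_left_mono[OF bounded dual_norm_nonneg[OF True]])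
    also have "\<dots> \<le> K \<phi>" unfolding K_def by (simp add: mult.commute)
    finally show ?thesis using True unfolding ev_def by simp
  qed (simp add: ev_def K_def)
  obtain L where L_box: "\<And>\<phi>. \<bar>L \<phi>\<bar> \<le> K \<phi>"
    and L_closed: "\<And>S. closed S \<Longrightarrow> (\<And>m. ev m \<in> S) \<Longrightarrow> L \<in> S"
    and L_open: "\<And>S. open S \<Longrightarrow> L \<in> S \<Longrightarrow> \<exists>\<^sub>F m in sequentially. ev m \<in> S"
    using bounded_family_cluster_point[where e = ev and K = K, OF ev_bound] by blast
  have L_add: "L (\<lambda>x. \<phi> x + \<psi> x) = L \<phi> + L \<psi>" if "\<phi> \<in> ?D" "\<psi> \<in> ?D" for \<phi> \<psi>
  proof -
    have "closed {h :: ('a \<Rightarrow> real) \<Rightarrow> real. h (\<lambda>x. \<phi> x + \<psi> x) = h \<phi> + h \<psi>}"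
      by (intro closed_Collect_eq continuous_intros) simp_all
    then have "L \<in> {h. h (\<lambda>x. \<phi> x + \<psi> x) = h \<phi> + h \<psi>}"
      by (rule L_closed) (use dual_on_add[OF that] that in \<open>simp add: ev_def\<close>)
    then show ?thesis by simp
  qed
  have L_scale: "L (\<lambda>x. a * \<phi> x) = a * L \<phi>" if "\<phi> \<in> ?D" for a \<phi>
  proof -
    have "closed {h. h (\<lambda>x. a * \<phi> x) = a * h \<phi>}"
      by (intro closed_Collect_eq continuous_intros) simp_all
    then have "L \<in> {h. h (\<lambda>x. a * \<phi> x) = a * h \<phi>}"
      by (rule L_closed) (use dual_on_scale[OF that] that in \<open>simp add: ev_def\<close>)
    then show ?thesis by simp
  qed
  have L_bound: "\<bar>L \<phi>\<bar> \<le> \<bar>B\<bar> * dual_norm V N \<phi>" if "\<phi> \<in> ?D" for \<phi>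
    using L_box[of \<phi>] dual_norm_nonneg[OF that] unfolding K_def by (simp add: abs_mult)
  have "\<exists>y\<in>V. \<forall>\<phi>\<in>?D. L \<phi> = \<phi> y"
    using refl L_add L_scale L_bound unfolding reflexive_on_def by blast
  then obtain y where y: "y \<in> V" and L_eval: "\<And>\<phi>. \<phi> \<in> ?D \<Longrightarrow> L \<phi> = \<phi> y" by blast
  obtain \<psi> where \<psi>: "\<psi> \<in> ?D" "\<psi> y = N y" and \<psi>_le: "\<And>x. x \<in> V \<Longrightarrow> \<bar>\<psi> x\<bar> \<le> N x"
    using hahn_banach_norming[OF y] by blast
  have "closed {h. h \<psi> \<le> B}" by (intro closed_Collect_le continuous_intros) simp_all
  moreover have "ev m \<psi> \<le> B" for m
    using \<psi>(1) \<psi>_le[OF r] bounded[of m] unfolding ev_def by (smt (verit))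
  ultimately have "L \<psi> \<le> B" using L_closed by blast
  then have "N y \<le> B" using L_eval \<psi> by simp
  moreover have "\<exists>\<^sub>F m in sequentially. \<bar>\<phi> (r m) - \<phi> y\<bar> < e" if "\<phi> \<in> ?D" "0 < e" for \<phi> e
  proof -
    have "open {h. \<bar>h \<phi> - L \<phi>\<bar> < e}" by (intro open_Collect_less continuous_intros) simp_all
    from L_open[OF this] have "\<exists>\<^sub>F m in sequentially. \<bar>ev m \<phi> - L \<phi>\<bar> < e"
      using \<open>0 < e\<close> by simp
    then show ?thesis using that L_eval by (simp add: ev_def)
  qed
  ultimately show thesis using that y by blast
qed

end

section \<open>The sequence spaces Theta_s\<close>

lemma Mset_iff: "f \<in> Mset X g s c \<longleftrightarrow> f \<in> X s \<and> (\<forall>i. \<bar>c i\<bar> \<le> \<bar>g i f\<bar>)"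
  unfolding Mset_def by simp

lemma Theta_iff: "c \<in> Theta X g s \<longleftrightarrow> Mset X g s c \<noteq> {}"
  unfolding Theta_def by simp

lemma ThetaI: "f \<in> Mset X g s c \<Longrightarrow> c \<in> Theta X g s"
  unfolding Theta_iff by blast

lemma Mset_coefficients: "f \<in> X s \<Longrightarrow> f \<in> Mset X g s (\<lambda>i. g i f)"
  unfolding Mset_iff by simp

lemma Mset_antimono: "(\<And>i. \<bar>d i\<bar> \<le> \<bar>c i\<bar>) \<Longrightarrow> Mset X g s c \<subseteq> Mset X g s d"
  unfolding Mset_def by (auto intro: order_trans)

lemma Theta_antimono: "X t \<subseteq> X s \<Longrightarrow> Theta X g t \<subseteq> Theta X g s"
  unfolding Theta_def Mset_def by blast

lemma Theta_norm_greatest: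
  "c \<in> Theta X g s \<Longrightarrow> (\<And>f. f \<in> Mset X g s c \<Longrightarrow> a \<le> N s f) \<Longrightarrow> a \<le> Theta_norm X N g s c"
  unfolding Theta_norm_def Theta_iff by (rule cInf_greatest) auto

lemma Theta_norm_less:
  "c \<in> Theta X g s \<Longrightarrow> Theta_norm X N g s c < e \<Longrightarrow> \<exists>f\<in>Mset X g s c. N s f < e"
  unfolding Theta_norm_def Theta_iff using cInf_lessD[of "N s ` Mset X g s c" e] by auto

locale theta_level =
  fixes X :: "nat \<Rightarrow> 'a set" and N :: "nat \<Rightarrow> 'a \<Rightarrow> real" and g :: "nat \<Rightarrow> 'a \<Rightarrow> real"
    and s :: nat
  assumes norm_nonneg: "x \<in> X s \<Longrightarrow> 0 \<le> N s x"
begin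

lemma Theta_norm_le: "f \<in> Mset X g s c \<Longrightarrow> Theta_norm X N g s c \<le> N s f"
  unfolding Theta_norm_def
  by (intro cInf_lower imageI bdd_belowI[of _ 0]) (auto simp: Mset_iff norm_nonneg)

lemma Theta_norm_nonneg: "c \<in> Theta X g s \<Longrightarrow> 0 \<le> Theta_norm X N g s c"
  by (rule Theta_norm_greatest) (auto simp: Mset_iff norm_nonneg)

lemma solid_Theta: "solid (Theta X g s) (Theta_norm X N g s)"
  unfolding solid_def
proof (intro ballI allI impI conjI)
  fix c d assume c: "c \<in> Theta X g s" and "\<forall>i. \<bar>d i\<bar> \<le> \<bar>c i\<bar>"
  then have M: "Mset X g s c \<subseteq> Mset X g s d" by (intro Mset_antimono) blast
  then show "d \<in> Theta X g s" using c unfolding Theta_iff by blast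
  show "Theta_norm X N g s d \<le> Theta_norm X N g s c"
    using M by (intro Theta_norm_greatest[OF c] Theta_norm_le) blast
qed

lemma bessel_seq_Theta: "bessel_seq (X s) (N s) (Theta X g s) (Theta_norm X N g s) g 1"
  unfolding bessel_seq_def using Mset_coefficients ThetaI Theta_norm_le by fastforce

lemma lower_bound_coefficient_norm:
  "condA3_with X N g s A \<Longrightarrow> f \<in> X s \<Longrightarrow> A * N s f \<le> Theta_norm X N g s (\<lambda>i. g i f)"
  using ThetaI[OF Mset_coefficients] unfolding condA3_with_def
  by (intro Theta_norm_greatest) auto

lemma frame_seq_Theta_iff_condA3:
  "frame_seq (X s) (N s) (Theta X g s) (Theta_norm X N g s) g \<longleftrightarrow> condA3 X N g s"
proof
  assume "frame_seq (X s) (N s) (Theta X g s) (Theta_norm X N g s) g"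
  then obtain A where A: "A > 0" "\<And>f. f \<in> X s \<Longrightarrow> A * N s f \<le> Theta_norm X N g s (\<lambda>i. g i f)"
    unfolding frame_seq_def by blast
  have "condA3_with X N g s (min A 1)"
    unfolding condA3_with_def
  proof (intro conjI ballI)
    fix f ft assume f: "f \<in> X s" and ft: "ft \<in> Mset X g s (\<lambda>i. g i f)"
    have "min A 1 * N s f \<le> A * N s f" using norm_nonneg[OF f] by (intro mult_right_mono) auto
    also have "\<dots> \<le> Theta_norm X N g s (\<lambda>i. g i f)" using A(2)[OF f] .
    also have "\<dots> \<le> N s ft" using Theta_norm_le[OF ft] .
    finally show "min A 1 * N s f \<le> N s ft" .
  qed (use A in auto)
  then show "condA3 X N g s" unfolding condA3_def by blast
next
  assume "condA3 X N g s"
  then obtain A where "condA3_with X N g s A" unfolding condA3_def by blast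
  then show "frame_seq (X s) (N s) (Theta X g s) (Theta_norm X N g s) g"
    unfolding frame_seq_def using bessel_seq_Theta lower_bound_coefficient_norm
    unfolding condA3_with_def by blast
qed

lemma tight_frame_seq_Theta:
  "condA3_with X N g s 1 \<Longrightarrow> tight_frame_seq (X s) (N s) (Theta X g s) (Theta_norm X N g s) g"
  unfolding tight_frame_seq_def using bessel_seq_Theta lower_bound_coefficient_norm[of 1]
  by (intro exI[of _ 1]) auto

lemma Theta_norm_mono:
  assumes "X t \<subseteq> X s" and "\<And>x. x \<in> X t \<Longrightarrow> N s x \<le> N t x" and c: "c \<in> Theta X g t"
  shows "Theta_norm X N g s c \<le> Theta_norm X N g t c"
proof (rule Theta_norm_greatest[OF c])
  fix f assume f: "f \<in> Mset X g t c"
  then have "f \<in> Mset X g s c" using assms(1) unfolding Mset_def by blast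
  then have "Theta_norm X N g s c \<le> N s f" by (rule Theta_norm_le)
  also have "\<dots> \<le> N t f" using assms(2) f unfolding Mset_iff by blast
  finally show "Theta_norm X N g s c \<le> N t f" .
qed

end

lemma sum_unit_vec: "(\<Sum>k<n. a k * unit_vec k i) = (if i < n then a i else 0)"
  unfolding unit_vec_def by (induction n) (auto simp: less_Suc_eq)

lemma sum_unit_vec_remainder:
  "(\<lambda>i. c i - (\<Sum>k<n. c k * unit_vec k i)) = (\<lambda>i. if i < n then 0 else c i)"
  by (rule ext) (simp add: sum_unit_vec)

locale theta_spaces =
  fixes X :: "nat \<Rightarrow> 'a::real_vector set"
    and N :: "nat \<Rightarrow> 'a \<Rightarrow> real"
    and g :: "nat \<Rightarrow> 'a \<Rightarrow> real"
  assumes banach: "\<And>s. banach_on (X s) (N s)"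
    and refl: "\<And>s. reflexive_on (X s) (N s)"
    and nested: "\<And>s. X (Suc s) \<subseteq> X s"
    and norm_mono: "\<And>s x. x \<in> X (Suc s) \<Longrightarrow> N s x \<le> N (Suc s) x"
    and dense: "\<And>s x e. x \<in> X s \<Longrightarrow> e > 0 \<Longrightarrow> \<exists>y\<in>(\<Inter>t. X t). N s (x - y) < e"
    and g_dual: "\<And>i. lin_on (X 0) (g i) \<and> (\<exists>C. \<forall>x\<in>X 0. \<bar>g i x\<bar> \<le> C * N 0 x)"
    and g_nz: "\<And>i. \<exists>x\<in>X 0. g i x \<noteq> 0"
    and A1: "\<And>s. condA1 X N g s"
begin

abbreviation "M s c \<equiv> Mset X g s c"
abbreviation "\<Theta> s \<equiv> Theta X g s"
abbreviation "\<Theta>_norm s \<equiv> Theta_norm X N g s"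

lemma seminorm: "seminorm_on (X s) (N s)"
  using banach by (rule banach_on_seminorm_on)

lemma subspace: "subspace (X s)"
  using seminorm seminorm_on.subspace by blast

sublocale level: theta_level X N g s for s
  by unfold_locales (rule seminorm_on.seminorm_nonneg[OF seminorm])

lemma X_antimono: "s \<le> t \<Longrightarrow> X t \<subseteq> X s"
  by (rule lift_Suc_antimono_le[of X, OF nested])

lemma norm_mono_le: "s \<le> t \<Longrightarrow> x \<in> X t \<Longrightarrow> N s x \<le> N t x"
proof (induction t rule: dec_induct)
  case (step t)
  then show ?case using norm_mono[of x t] nested[of t] by force
qed simp

lemma g_add: "x \<in> X s \<Longrightarrow> y \<in> X s \<Longrightarrow> g i (x + y) = g i x + g i y"
  and g_scale: "x \<in> X s \<Longrightarrow> g i (a *\<^sub>R x) = a * g i x"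
  using g_dual[of i] X_antimono[of 0 s] unfolding lin_on_def by blast+

lemma g_diff: "x \<in> X s \<Longrightarrow> y \<in> X s \<Longrightarrow> g i (x - y) = g i x - g i y"
  using g_add[of x s "(-1) *\<^sub>R y" i] g_scale[of y s i "-1"] subspace_scale[OF subspace, of y s "-1"]
  by simp

lemma g_bounded:
  obtains C where "C > 0" "\<And>x. x \<in> X s \<Longrightarrow> \<bar>g i x\<bar> \<le> C * N s x"
proof -
  obtain C where C: "\<forall>x\<in>X 0. \<bar>g i x\<bar> \<le> C * N 0 x" using g_dual by blast
  have "\<bar>g i x\<bar> \<le> (\<bar>C\<bar> + 1) * N s x" if x: "x \<in> X s" for x
  proof -
    have x0: "x \<in> X 0" using X_antimono[of 0 s] x by blast
    have "\<bar>g i x\<bar> \<le> C * N 0 x" using C x0 by blast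
    also have "\<dots> \<le> (\<bar>C\<bar> + 1) * N 0 x" using level.norm_nonneg[OF x0] by (intro mult_right_mono) auto
    also have "\<dots> \<le> (\<bar>C\<bar> + 1) * N s x" using norm_mono_le[OF _ x] by (intro mult_left_mono) auto
    finally show ?thesis .
  qed
  then show thesis by (intro that[of "\<bar>C\<bar> + 1"]) auto
qed

lemma g_restrict_dual: "(\<lambda>x. if x \<in> X s then g i x else 0) \<in> dual_on (X s) (N s)"
proof -
  obtain C where "\<And>x. x \<in> X s \<Longrightarrow> \<bar>g i x\<bar> \<le> C * N s x" using g_bounded by blast
  then show ?thesis
    unfolding dual_on_def lin_on_def
    using g_add g_scale subspace_add[OF subspace] subspace_scale[OF subspace] by auto
qed

lemma Theta_coordinate_bound:
  obtains C where "C > 0" "\<And>c. c \<in> \<Theta> s \<Longrightarrow> \<bar>c i\<bar> \<le> C * \<Theta>_norm s c"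
proof -
  obtain C where C: "C > 0" "\<And>x. x \<in> X s \<Longrightarrow> \<bar>g i x\<bar> \<le> C * N s x"
    using g_bounded[where s = s and i = i] by blast
  have "\<bar>c i\<bar> \<le> C * \<Theta>_norm s c" if c: "c \<in> \<Theta> s" for c
  proof -
    have "\<bar>c i\<bar> / C \<le> \<Theta>_norm s c"
    proof (rule Theta_norm_greatest[OF c])
      fix f assume "f \<in> M s c"
      then have "\<bar>c i\<bar> \<le> C * N s f" using C(2) unfolding Mset_iff by (meson order_trans)
      then show "\<bar>c i\<bar> / C \<le> N s f" using C(1) by (simp add: divide_le_eq mult.commute)
    qed
    then show ?thesis using C(1) by (simp add: divide_le_eq mult.commute)
  qed
  with C(1) show thesis by (rule that)
qed

lemma Theta_zero: "(\<lambda>i. 0) \<in> \<Theta> s" "\<Theta>_norm s (\<lambda>i. 0) = 0"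
proof -
  have z: "0 \<in> M s (\<lambda>i. 0)" unfolding Mset_iff using subspace_0[OF subspace] by simp
  then show "(\<lambda>i. 0) \<in> \<Theta> s" by (rule ThetaI)
  have "\<Theta>_norm s (\<lambda>i. 0) \<le> N s 0" by (rule level.Theta_norm_le[OF z])
  then show "\<Theta>_norm s (\<lambda>i. 0) = 0"
    using seminorm_on.seminorm_zero[OF seminorm] level.Theta_norm_nonneg[OF \<open>(\<lambda>i. 0) \<in> \<Theta> s\<close>] by simp
qed

lemma Theta_scale_le:
  assumes c: "c \<in> \<Theta> s"
  shows "(\<lambda>i. a * c i) \<in> \<Theta> s" "\<Theta>_norm s (\<lambda>i. a * c i) \<le> \<bar>a\<bar> * \<Theta>_norm s c"
proof -
  have scaled: "a *\<^sub>R f \<in> M s (\<lambda>i. a * c i)" if "f \<in> M s c" for f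
    using that subspace_scale[OF subspace] g_scale unfolding Mset_iff
    by (auto simp: abs_mult intro!: mult_left_mono)
  then show "(\<lambda>i. a * c i) \<in> \<Theta> s" using c unfolding Theta_iff by blast
  show "\<Theta>_norm s (\<lambda>i. a * c i) \<le> \<bar>a\<bar> * \<Theta>_norm s c"
  proof (cases "a = 0")
    case True then show ?thesis using Theta_zero by simp
  next
    case False
    have "\<Theta>_norm s (\<lambda>i. a * c i) / \<bar>a\<bar> \<le> \<Theta>_norm s c"
    proof (rule Theta_norm_greatest[OF c])
      fix f assume f: "f \<in> M s c"
      have "\<Theta>_norm s (\<lambda>i. a * c i) \<le> N s (a *\<^sub>R f)" by (rule level.Theta_norm_le[OF scaled[OF f]])
      also have "\<dots> = \<bar>a\<bar> * N s f" using f seminorm_on.homogeneous[OF seminorm] unfolding Mset_iff by blast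
      finally show "\<Theta>_norm s (\<lambda>i. a * c i) / \<bar>a\<bar> \<le> N s f"
        using False by (simp add: divide_le_eq mult.commute)
    qed
    then show ?thesis using False by (simp add: divide_le_eq mult.commute)
  qed
qed

lemma Theta_scale:
  assumes c: "c \<in> \<Theta> s"
  shows "(\<lambda>i. a * c i) \<in> \<Theta> s" "\<Theta>_norm s (\<lambda>i. a * c i) = \<bar>a\<bar> * \<Theta>_norm s c"
proof -
  show ac: "(\<lambda>i. a * c i) \<in> \<Theta> s" by (rule Theta_scale_le[OF c])
  show "\<Theta>_norm s (\<lambda>i. a * c i) = \<bar>a\<bar> * \<Theta>_norm s c"
  proof (cases "a = 0")
    case True then show ?thesis using Theta_zero by simp
  next
    case False
    have "\<Theta>_norm s c \<le> \<bar>1 / a\<bar> * \<Theta>_norm s (\<lambda>i. a * c i)"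
      using Theta_scale_le(2)[OF ac, of "1 / a"] False by simp
    then have "\<bar>a\<bar> * \<Theta>_norm s c \<le> \<Theta>_norm s (\<lambda>i. a * c i)"
      using False by (simp add: field_simps abs_divide)
    then show ?thesis using Theta_scale_le(2)[OF c, of a] by simp
  qed
qed

lemma Theta_add:
  assumes c: "c \<in> \<Theta> s" and d: "d \<in> \<Theta> s"
  shows "(\<lambda>i. c i + d i) \<in> \<Theta> s" "\<Theta>_norm s (\<lambda>i. c i + d i) \<le> \<Theta>_norm s c + \<Theta>_norm s d"
proof -
  have sum: "\<exists>r\<in>M s (\<lambda>i. c i + d i). N s r \<le> N s f + N s h" if "f \<in> M s c" "h \<in> M s d" for f h
    using A1[of s] c d that unfolding condA1_def by blast
  obtain f h where "f \<in> M s c" "h \<in> M s d" using c d unfolding Theta_iff by blast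
  then obtain r where "r \<in> M s (\<lambda>i. c i + d i)" using sum by blast
  then show "(\<lambda>i. c i + d i) \<in> \<Theta> s" by (rule ThetaI)
  have "\<Theta>_norm s (\<lambda>i. c i + d i) - \<Theta>_norm s d \<le> \<Theta>_norm s c"
  proof (rule Theta_norm_greatest[OF c])
    fix f assume f: "f \<in> M s c"
    have "\<Theta>_norm s (\<lambda>i. c i + d i) - N s f \<le> \<Theta>_norm s d"
    proof (rule Theta_norm_greatest[OF d])
      fix h assume h: "h \<in> M s d"
      obtain r where "r \<in> M s (\<lambda>i. c i + d i)" "N s r \<le> N s f + N s h" using sum[OF f h] by blast
      then show "\<Theta>_norm s (\<lambda>i. c i + d i) - N s f \<le> N s h" using level.Theta_norm_le by fastforce
    qed
    then show "\<Theta>_norm s (\<lambda>i. c i + d i) - \<Theta>_norm s d \<le> N s f" by simp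
  qed
  then show "\<Theta>_norm s (\<lambda>i. c i + d i) \<le> \<Theta>_norm s c + \<Theta>_norm s d" by simp
qed

lemma Theta_diff: "c \<in> \<Theta> s \<Longrightarrow> d \<in> \<Theta> s \<Longrightarrow> (\<lambda>i. c i - d i) \<in> \<Theta> s"
  using Theta_add(1)[of c s "\<lambda>i. (-1) * d i"] Theta_scale(1)[of d s "-1"] by simp

lemma Theta_norm_minus_commute:
  "c \<in> \<Theta> s \<Longrightarrow> d \<in> \<Theta> s \<Longrightarrow> \<Theta>_norm s (\<lambda>i. c i - d i) = \<Theta>_norm s (\<lambda>i. d i - c i)"
  using Theta_scale(2)[OF Theta_diff[of d s c], of "-1"] by simp

(* The Fatou property of Theta_s; this is where reflexivity is used. *)
lemma Theta_coordinatewise_limit: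
  assumes v: "\<And>m. v m \<in> \<Theta> s" "\<And>m. \<Theta>_norm s (v m) < e"
    and lim: "\<And>i. (\<lambda>m. v m i) \<longlonglongrightarrow> w i"
  shows "w \<in> \<Theta> s" "\<Theta>_norm s w \<le> e"
proof -
  have "\<exists>r. r \<in> M s (v m) \<and> N s r < e" for m using Theta_norm_less[OF v] by blast
  then obtain r where r: "\<And>m. r m \<in> M s (v m)" "\<And>m. N s (r m) < e" by metis
  have rX: "r m \<in> X s" for m using r(1) unfolding Mset_iff by blast
  have bounded: "N s (r m) \<le> e" for m using r(2) less_imp_le by blast
  obtain y where y: "y \<in> X s" "N s y \<le> e" and cluster:
    "\<And>\<phi> \<epsilon>. \<phi> \<in> dual_on (X s) (N s) \<Longrightarrow> 0 < \<epsilon> \<Longrightarrow> \<exists>\<^sub>F m in sequentially. \<bar>\<phi> (r m) - \<phi> y\<bar> < \<epsilon>"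
    by (rule seminorm_on.bounded_seq_weak_cluster_point[OF seminorm refl, where r = r and B = e])
      (use rX bounded in auto)
  have "\<bar>w i\<bar> \<le> \<bar>g i y\<bar>" for i
  proof (rule field_le_epsilon)
    fix \<epsilon> :: real assume "0 < \<epsilon>"
    then have "\<exists>\<^sub>F m in sequentially. \<bar>g i (r m) - g i y\<bar> < \<epsilon> / 2"
      using cluster[OF g_restrict_dual, of "\<epsilon> / 2"] rX y(1) by simp
    moreover have "\<forall>\<^sub>F m in sequentially. \<bar>v m i - w i\<bar> < \<epsilon> / 2"
      using tendstoD[OF lim[of i], of "\<epsilon> / 2"] \<open>0 < \<epsilon>\<close> by (simp add: dist_real_def)
    ultimately have "\<exists>\<^sub>F m in sequentially. \<bar>v m i - w i\<bar> < \<epsilon> / 2 \<and> \<bar>g i (r m) - g i y\<bar> < \<epsilon> / 2"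
      by (rule frequently_eventually_conj)
    then obtain m where "\<bar>v m i - w i\<bar> < \<epsilon> / 2 \<and> \<bar>g i (r m) - g i y\<bar> < \<epsilon> / 2"
      by (rule frequentlyE)
    moreover have "\<bar>v m i\<bar> \<le> \<bar>g i (r m)\<bar>" using r(1) unfolding Mset_iff by blast
    ultimately show "\<bar>w i\<bar> \<le> \<bar>g i y\<bar> + \<epsilon>" by linarith
  qed
  then have "y \<in> M s w" using y(1) unfolding Mset_iff by blast
  then show "w \<in> \<Theta> s" by (rule ThetaI)
  show "\<Theta>_norm s w \<le> e" using level.Theta_norm_le[OF \<open>y \<in> M s w\<close>] y(2) by simp
qed

lemma Theta_Cauchy_coordinate:
  assumes u: "\<And>n. u n \<in> \<Theta> s"
    and cauchy: "\<forall>e>0. \<exists>K. \<forall>m\<ge>K. \<forall>n\<ge>K. \<Theta>_norm s (\<lambda>i. u m i - u n i) < e"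
  shows "Cauchy (\<lambda>n. u n i)"
proof (rule metric_CauchyI)
  fix e :: real assume "0 < e"
  obtain C where C: "C > 0" "\<And>c. c \<in> \<Theta> s \<Longrightarrow> \<bar>c i\<bar> \<le> C * \<Theta>_norm s c"
    using Theta_coordinate_bound[where s = s and i = i] by blast
  have "e / C > 0" using \<open>0 < e\<close> C(1) by simp
  then obtain K where K: "\<forall>m\<ge>K. \<forall>n\<ge>K. \<Theta>_norm s (\<lambda>i. u m i - u n i) < e / C"
    using cauchy by blast
  have "dist (u m i) (u n i) < e" if "K \<le> m" "K \<le> n" for m n
  proof -
    have "\<bar>u m i - u n i\<bar> \<le> C * \<Theta>_norm s (\<lambda>i. u m i - u n i)"
      using C(2)[OF Theta_diff[OF u u]] by simp
    also have "\<dots> < e" using K that C(1) by (simp add: mult.commute pos_less_divide_eq)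
    finally show ?thesis by (simp add: dist_real_def)
  qed
  then show "\<exists>K. \<forall>m\<ge>K. \<forall>n\<ge>K. dist (u m i) (u n i) < e" by blast
qed

lemma Theta_complete:
  assumes u: "\<And>n. u n \<in> \<Theta> s"
    and cauchy: "\<forall>e>0. \<exists>K. \<forall>m\<ge>K. \<forall>n\<ge>K. \<Theta>_norm s (\<lambda>i. u m i - u n i) < e"
  shows "\<exists>c\<in>\<Theta> s. (\<lambda>n. \<Theta>_norm s (\<lambda>i. u n i - c i)) \<longlonglongrightarrow> 0"
proof -
  have "Cauchy (\<lambda>n. u n i)" for i using u cauchy by (rule Theta_Cauchy_coordinate)
  then have "convergent (\<lambda>n. u n i)" for i by (simp add: Cauchy_convergent_iff)
  define c where "c i = lim (\<lambda>n. u n i)" for i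
  have c: "(\<lambda>n. u n i) \<longlonglongrightarrow> c i" for i
    unfolding c_def using \<open>convergent (\<lambda>n. u n i)\<close> by (rule convergent_LIMSEQ_iff[THEN iffD1])
  have tail: "\<exists>K. \<forall>n\<ge>K. (\<lambda>i. c i - u n i) \<in> \<Theta> s \<and> \<Theta>_norm s (\<lambda>i. c i - u n i) \<le> e"
    if "e > 0" for e
  proof -
    obtain K where K: "\<forall>m\<ge>K. \<forall>n\<ge>K. \<Theta>_norm s (\<lambda>i. u m i - u n i) < e"
      using cauchy \<open>e > 0\<close> by blast
    have "(\<lambda>i. c i - u n i) \<in> \<Theta> s \<and> \<Theta>_norm s (\<lambda>i. c i - u n i) \<le> e" if "K \<le> n" for n
    proof -
      have v: "\<And>m. (\<lambda>i. u (m + K) i - u n i) \<in> \<Theta> s" by (rule Theta_diff[OF u u])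
      have small: "\<And>m. \<Theta>_norm s (\<lambda>i. u (m + K) i - u n i) < e" using K that by simp
      have lim: "\<And>i. (\<lambda>m. u (m + K) i - u n i) \<longlonglongrightarrow> c i - u n i"
        by (rule tendsto_diff[OF LIMSEQ_ignore_initial_segment[OF c] tendsto_const])
      show ?thesis using Theta_coordinatewise_limit[of "\<lambda>m i. u (m + K) i - u n i", OF v small lim]
        by simp
    qed
    then show ?thesis by blast
  qed
  obtain K where "\<forall>n\<ge>K. (\<lambda>i. c i - u n i) \<in> \<Theta> s \<and> \<Theta>_norm s (\<lambda>i. c i - u n i) \<le> 1"
    using tail[of 1] by auto
  then have "(\<lambda>i. c i - u K i) \<in> \<Theta> s" by simp
  from Theta_add(1)[OF this u[of K]] have c_Theta: "c \<in> \<Theta> s" by simp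
  have "(\<lambda>n. \<Theta>_norm s (\<lambda>i. u n i - c i)) \<longlonglongrightarrow> 0"
  proof (rule LIMSEQ_I)
    fix e :: real assume "0 < e"
    then obtain K where K: "\<forall>n\<ge>K. \<Theta>_norm s (\<lambda>i. c i - u n i) \<le> e / 2" using tail[of "e / 2"] by auto
    have "norm (\<Theta>_norm s (\<lambda>i. u n i - c i) - 0) < e" if "K \<le> n" for n
    proof -
      have "\<Theta>_norm s (\<lambda>i. u n i - c i) \<le> e / 2"
        using K that Theta_norm_minus_commute[OF u c_Theta] by simp
      moreover have "0 \<le> \<Theta>_norm s (\<lambda>i. u n i - c i)"
        by (rule level.Theta_norm_nonneg[OF Theta_diff[OF u c_Theta]])
      ultimately show ?thesis using \<open>0 < e\<close> by simp
    qed
    then show "\<exists>K. \<forall>n\<ge>K. norm (\<Theta>_norm s (\<lambda>i. u n i - c i) - 0) < e" by blast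
  qed
  with c_Theta show ?thesis by blast
qed

lemma banach_seq_space_Theta: "banach_seq_space (\<Theta> s) (\<Theta>_norm s)"
  unfolding banach_seq_space_def
proof (intro conjI ballI allI impI)
  fix c assume c: "c \<in> \<Theta> s"
  show "\<Theta>_norm s c = 0 \<longleftrightarrow> c = (\<lambda>i. 0)"
  proof
    assume norm0: "\<Theta>_norm s c = 0"
    show "c = (\<lambda>i. 0)"
    proof
      fix i
      obtain C where "\<And>c. c \<in> \<Theta> s \<Longrightarrow> \<bar>c i\<bar> \<le> C * \<Theta>_norm s c"
        using Theta_coordinate_bound[where s = s and i = i] by blast
      then show "c i = 0" using c norm0 by fastforce
    qed
  qed (simp add: Theta_zero)
qed (use Theta_zero Theta_add Theta_scale level.Theta_norm_nonneg Theta_complete in auto)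

lemma BK_space_Theta: "BK_space (\<Theta> s) (\<Theta>_norm s)"
  unfolding BK_space_def
proof (intro conjI banach_seq_space_Theta allI ballI impI)
  fix i c and e :: real assume c: "c \<in> \<Theta> s" and "0 < e"
  obtain C where C: "C > 0" "\<And>c. c \<in> \<Theta> s \<Longrightarrow> \<bar>c i\<bar> \<le> C * \<Theta>_norm s c"
    using Theta_coordinate_bound[where s = s and i = i] by blast
  have "\<bar>d i - c i\<bar> < e" if d: "d \<in> \<Theta> s" and "\<Theta>_norm s (\<lambda>j. d j - c j) < e / C" for d
  proof -
    have "\<bar>d i - c i\<bar> \<le> C * \<Theta>_norm s (\<lambda>j. d j - c j)" using C(2)[OF Theta_diff[OF d c]] by simp
    also have "\<dots> < e" using that C(1) by (simp add: mult.commute pos_less_divide_eq)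
    finally show ?thesis .
  qed
  then show "\<exists>\<delta>>0. \<forall>d\<in>\<Theta> s. \<Theta>_norm s (\<lambda>j. d j - c j) < \<delta> \<longrightarrow> \<bar>d i - c i\<bar> < e"
    using C(1) \<open>0 < e\<close> by (intro exI[of _ "e / C"]) auto
qed

lemma exists_common_vector_nonvanishing: "\<exists>y\<in>(\<Inter>t. X t). g k y \<noteq> 0"
proof -
  obtain x where x: "x \<in> X 0" "g k x \<noteq> 0" using g_nz by blast
  obtain C where C: "C > 0" "\<And>x. x \<in> X 0 \<Longrightarrow> \<bar>g k x\<bar> \<le> C * N 0 x"
    using g_bounded[where s = 0 and i = k] by blast
  have "\<bar>g k x\<bar> / C > 0" using x(2) C(1) by simp
  then obtain y where y: "y \<in> (\<Inter>t. X t)" "N 0 (x - y) < \<bar>g k x\<bar> / C"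
    using dense[OF x(1)] by blast
  have y0: "y \<in> X 0" using y(1) by blast
  have "\<bar>g k x - g k y\<bar> \<le> C * N 0 (x - y)"
    using g_diff[OF x(1) y0] C(2)[OF subspace_diff[OF subspace x(1) y0]] by simp
  also have "\<dots> < \<bar>g k x\<bar>" using y(2) C(1) by (simp add: mult.commute pos_less_divide_eq)
  finally have "g k y \<noteq> 0" by auto
  with y(1) show ?thesis by blast
qed

lemma Inter_Theta_nontrivial: "(\<Inter>s. \<Theta> s) \<noteq> {\<lambda>i. 0}"
proof
  assume trivial: "(\<Inter>s. \<Theta> s) = {\<lambda>i. 0}"
  obtain y where y: "y \<in> (\<Inter>t. X t)" "g 0 y \<noteq> 0" using exists_common_vector_nonvanishing by blast
  have "(\<lambda>i. g i y) \<in> \<Theta> s" for s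
    using y(1) by (intro ThetaI[OF Mset_coefficients]) blast
  then have "(\<lambda>i. g i y) = (\<lambda>i. 0)" using trivial by blast
  with y(2) show False using fun_cong[of "\<lambda>i. g i y" "\<lambda>i. 0" 0] by simp
qed

lemma unit_vec_Theta: "unit_vec k \<in> \<Theta> s"
proof -
  obtain y where y: "y \<in> (\<Inter>t. X t)" "g k y \<noteq> 0" using exists_common_vector_nonvanishing by blast
  then have ys: "y \<in> X s" by blast
  have "(1 / g k y) *\<^sub>R y \<in> X s" by (rule subspace_scale[OF subspace ys])
  moreover have "\<bar>unit_vec k i\<bar> \<le> \<bar>g i ((1 / g k y) *\<^sub>R y)\<bar>" for i
    using y(2) g_scale[OF ys, of i] by (simp add: unit_vec_def)
  ultimately have "(1 / g k y) *\<^sub>R y \<in> M s (unit_vec k)" unfolding Mset_iff by blast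
  then show ?thesis by (rule ThetaI)
qed

lemma partial_sum_Theta: "(\<lambda>i. \<Sum>k<n. a k * unit_vec k i) \<in> \<Theta> s"
proof (induction n)
  case 0
  then show ?case using Theta_zero by simp
next
  case (Suc n)
  from Theta_add(1)[OF Suc Theta_scale(1)[OF unit_vec_Theta, of "a n"]] show ?case by simp
qed

lemma unit_expansion_unique:
  assumes c: "c \<in> \<Theta> s"
    and lim: "(\<lambda>n. \<Theta>_norm s (\<lambda>i. c i - (\<Sum>k<n. a k * unit_vec k i))) \<longlonglongrightarrow> 0"
  shows "a = c"
proof
  fix i
  obtain C where C: "C > 0" "\<And>c. c \<in> \<Theta> s \<Longrightarrow> \<bar>c i\<bar> \<le> C * \<Theta>_norm s c"
    using Theta_coordinate_bound[where s = s and i = i] by blast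
  have "\<bar>c i - a i\<bar> \<le> C * \<Theta>_norm s (\<lambda>i. c i - (\<Sum>k<n. a k * unit_vec k i))" if "i < n" for n
    using C(2)[OF Theta_diff[OF c partial_sum_Theta[where n = n and a = a]]] that
    by (simp add: sum_unit_vec)
  then have "\<forall>\<^sub>F n in sequentially. \<bar>c i - a i\<bar> \<le> C * \<Theta>_norm s (\<lambda>i. c i - (\<Sum>k<n. a k * unit_vec k i))"
    unfolding eventually_sequentially by (metis Suc_le_eq)
  moreover have "(\<lambda>n. C * \<Theta>_norm s (\<lambda>i. c i - (\<Sum>k<n. a k * unit_vec k i))) \<longlonglongrightarrow> C * 0"
    using lim by (rule tendsto_mult_left)
  ultimately have "\<bar>c i - a i\<bar> \<le> C * 0" by (intro tendsto_le[OF _ _ tendsto_const]) auto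
  then show "a i = c i" by simp
qed

lemma unit_expansion_converges:
  assumes c: "c \<in> \<Theta> s" and A2: "condA2 X N g s"
  shows "(\<lambda>n. \<Theta>_norm s (\<lambda>i. c i - (\<Sum>k<n. c k * unit_vec k i))) \<longlonglongrightarrow> 0"
proof (rule LIMSEQ_I)
  fix e :: real assume "0 < e"
  then obtain k f where f: "f \<in> M s (\<lambda>i. if i < k then 0 else c i)" "N s f < e"
    using A2 c unfolding condA2_def by blast
  have "norm (\<Theta>_norm s (\<lambda>i. c i - (\<Sum>k<n. c k * unit_vec k i)) - 0) < e" if "k \<le> n" for n
  proof -
    have "M s (\<lambda>i. if i < k then 0 else c i) \<subseteq> M s (\<lambda>i. if i < n then 0 else c i)"
      by (rule Mset_antimono) (use that in auto)
    with f(1) have "f \<in> M s (\<lambda>i. if i < n then 0 else c i)" by blast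
    then have "0 \<le> \<Theta>_norm s (\<lambda>i. if i < n then 0 else c i)"
      and "\<Theta>_norm s (\<lambda>i. if i < n then 0 else c i) < e"
      using level.Theta_norm_nonneg[OF ThetaI] level.Theta_norm_le f(2) by (blast, fastforce)
    then show ?thesis by (simp add: sum_unit_vec_remainder)
  qed
  then show "\<exists>n0. \<forall>n\<ge>n0. norm (\<Theta>_norm s (\<lambda>i. c i - (\<Sum>k<n. c k * unit_vec k i)) - 0) < e"
    by blast
qed

lemma CB_space_Theta_iff_condA2: "CB_space (\<Theta> s) (\<Theta>_norm s) \<longleftrightarrow> condA2 X N g s"
proof
  assume CB: "CB_space (\<Theta> s) (\<Theta>_norm s)"
  show "condA2 X N g s"
    unfolding condA2_def
  proof (intro ballI allI impI)
    fix c and e :: real assume c: "c \<in> \<Theta> s" and "0 < e"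
    obtain a where "(\<lambda>n. \<Theta>_norm s (\<lambda>i. c i - (\<Sum>k<n. a k * unit_vec k i))) \<longlonglongrightarrow> 0"
      using CB c unfolding CB_space_def schauder_basis_def by blast
    moreover from this have "a = c" by (rule unit_expansion_unique[OF c])
    ultimately have "(\<lambda>n. \<Theta>_norm s (\<lambda>i. if i < n then 0 else c i)) \<longlonglongrightarrow> 0"
      by (simp add: sum_unit_vec_remainder)
    then obtain n0 where n0: "\<And>n. n \<ge> n0 \<Longrightarrow> \<Theta>_norm s (\<lambda>i. if i < n then 0 else c i) < e"
      using \<open>0 < e\<close> unfolding LIMSEQ_iff by fastforce
    define k where "k = max n0 1"
    have "(\<lambda>i. if i < k then 0 else c i) \<in> \<Theta> s"
      using Theta_diff[OF c partial_sum_Theta[where n = k and a = c]]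
      by (simp add: sum_unit_vec_remainder)
    then obtain f where "f \<in> M s (\<lambda>i. if i < k then 0 else c i)" "N s f < e"
      using Theta_norm_less n0[of k] unfolding k_def by fastforce
    moreover have "k \<ge> 1" unfolding k_def by simp
    ultimately show "\<exists>k\<ge>1. \<exists>f\<in>M s (\<lambda>i. if i < k then 0 else c i). N s f < e" by blast
  qed
next
  assume A2: "condA2 X N g s"
  show "CB_space (\<Theta> s) (\<Theta>_norm s)"
    unfolding CB_space_def schauder_basis_def
    using BK_space_Theta unit_vec_Theta unit_expansion_converges[OF _ A2] unit_expansion_unique
    by blast
qed

end

theorem theorem5p1:
  fixes X :: "nat \<Rightarrow> 'a::real_vector set"
    and N :: "nat \<Rightarrow> 'a \<Rightarrow> real"
    and g :: "nat \<Rightarrow> 'a \<Rightarrow> real"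
  assumes banach: "\<And>s. banach_on (X s) (N s)"
    and refl: "\<And>s. reflexive_on (X s) (N s)"
    and nested: "\<And>s. X (Suc s) \<subseteq> X s"
    and nontriv: "(\<Inter>s. X s) \<noteq> {0}"
    and norm_mono: "\<And>s x. x \<in> X (Suc s) \<Longrightarrow> N s x \<le> N (Suc s) x"
    and dense: "\<And>s x e. x \<in> X s \<Longrightarrow> e > 0 \<Longrightarrow> \<exists>y\<in>(\<Inter>t. X t). N s (x - y) < e"
    and g_dual: "\<And>i. lin_on (X 0) (g i) \<and> (\<exists>C. \<forall>x\<in>X 0. \<bar>g i x\<bar> \<le> C * N 0 x)"
    and g_nz: "\<And>i. \<exists>x\<in>X 0. g i x \<noteq> 0"
    and A1: "\<And>s. condA1 X N g s"
  shows
    \<comment> \<open>(P1)\<close>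
    "(\<forall>s. solid (Theta X g s) (Theta_norm X N g s) \<and> BK_space (Theta X g s) (Theta_norm X N g s))
     \<and> (\<Inter>s. Theta X g s) \<noteq> {\<lambda>i. 0}
     \<and> (\<forall>s. Theta X g (Suc s) \<subseteq> Theta X g s)
     \<and> (\<forall>s. \<forall>c\<in>Theta X g (Suc s). Theta_norm X N g s c \<le> Theta_norm X N g (Suc s) c)
     \<and> (\<forall>s. bessel_seq (X s) (N s) (Theta X g s) (Theta_norm X N g s) g 1)
     \<comment> \<open>(P2)\<close>
     \<and> (\<forall>s\<ge>1. (frame_seq (X s) (N s) (Theta X g s) (Theta_norm X N g s) g \<longleftrightarrow> condA3 X N g s)
               \<and> (condA3_with X N g s 1 \<longrightarrow>
                    tight_frame_seq (X s) (N s) (Theta X g s) (Theta_norm X N g s) g))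
     \<comment> \<open>(P3)\<close>
     \<and> (\<forall>s\<ge>1. CB_space (Theta X g s) (Theta_norm X N g s) \<longleftrightarrow> condA2 X N g s)"
proof -
  interpret theta_spaces X N g
    using banach refl nested norm_mono dense g_dual g_nz A1 by unfold_locales
  have "Theta X g (Suc s) \<subseteq> Theta X g s" for s
    by (rule Theta_antimono) (rule nested)
  moreover have "Theta_norm X N g s c \<le> Theta_norm X N g (Suc s) c" if "c \<in> Theta X g (Suc s)" for s c
    using nested norm_mono that by (rule level.Theta_norm_mono)
  ultimately show ?thesis
    by (simp add: level.solid_Theta BK_space_Theta Inter_Theta_nontrivial level.bessel_seq_Theta
        level.frame_seq_Theta_iff_condA3 level.tight_frame_seq_Theta CB_space_Theta_iff_condA2)
qed

end
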